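(* For every integer $j\ge 0$, $$\sum_{n=1}^{\infty}\frac{4^n}{n^2\binom{2n}{n}}\,t_n^{\star}(\{2\}_j)=8\sum_{k=0}^{2j}(-1)^k\,\beta(k+1)\,\beta(2j-k+1).$$
   Context: For integers $n\ge 1$ and $j\ge 0$, the multiple $t$-harmonic star sum of depth $j$ and weight $2j$ is $$t_n^{\star}(\{2\}_j)=\sum_{n\ge k_1\ge\dots\ge k_j\ge 1}\prod_{i=1}^j\frac{1}{(2k_i-1)^2},$$ equivalently $t_n^{\star}(\emptyset)=1$ and $t_n^{\star}(\{2\}_j)=\sum_{k=1}^n \frac{t_k^{\star}(\{2\}_{j-1})}{(2k-1)^2}$ for $j\ge1$. The Dirichlet beta function is $\beta(m)=\sum_{k=1}^\infty \frac{(-1)^{k-1}}{(2k-1)^m}$ for integers $m\ge1$ (so $\beta(1)=\pi/4$). *)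

theory Defs
  imports "HOL-Analysis.Analysis"
begin

fun tstar2 :: "nat \<Rightarrow> nat \<Rightarrow> real" where
  "tstar2 0 n = 1"
| "tstar2 (Suc j) n = (\<Sum>k=1..n. tstar2 j k / (2 * real k - 1)^2)"

text \<open>Dirichlet beta function at positive integers m:
  beta(m) = sum_{k>=1} (-1)^(k-1)/(2k-1)^m, written with index k = i+1.\<close>
definition dbeta :: "nat \<Rightarrow> real" where
  "dbeta m = (\<Sum>i. (-1)^i / (2 * real i + 1)^m)"

end

theory Submission
  imports Defs
begin

(*
  The star sums are complete homogeneous symmetric functions of the numbers 1/(2k-1)^2,
  so partial fractions give t_n^*({2}_j) = sum_k c(n,k) / (2k-1)^(2j), and the weight
  4^n / (n^2 C(2n,n)) turns c(n,k) into (-1)^(k-1) 4/(2k-1) e(n,k) with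
  e(n,k) = C(2n,n-k) (n+k) / (4^n n^2).  A Wilf-Zeilberger pair shows that the column
  sums E(k) = sum_n e(n,k) satisfy E(k) + E(k+1) = 2/k, exactly like 2 L(k) for the
  alternating tails L(k) = sum_b (-1)^b / (k+b); as both are O(1/k), E(k) = 2 L(k).
  Hence the left-hand side is 8 sum_a (-1)^a L(a+1) / (2a+1)^(2j+1).  On the right, the
  products beta(k+1) beta(2j-k+1) are expanded over a square of indices a, b; summing the
  geometric progression in k leaves (1/p^(2j+1) + 1/q^(2j+1)) / (p+q) with p = 2a+1,
  q = 2b+1, and symmetrising in a, b produces the same series.  In both truncations the
  error terms are alternating sums with decreasing terms, which vanish in the limit.
*)

section \<open>Alternating sums\<close>

lemma alternating_sum_bounds:
  fixes c :: "nat \<Rightarrow> real"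
  assumes "\<And>i. 0 \<le> c i" and "\<And>i. c (Suc i) \<le> c i"
  shows "0 \<le> (\<Sum>i<n. (-1)^i * c i) \<and> (\<Sum>i<n. (-1)^i * c i) \<le> c 0"
  using assms
proof (induction n arbitrary: c)
  case 0
  then show ?case by simp
next
  case (Suc n)
  have "0 \<le> (\<Sum>i<n. (-1)^i * c (Suc i)) \<and> (\<Sum>i<n. (-1)^i * c (Suc i)) \<le> c (Suc 0)"
    using Suc.prems by (intro Suc.IH) auto
  moreover have "(\<Sum>i<Suc n. (-1)^i * c i) = c 0 - (\<Sum>i<n. (-1)^i * c (Suc i))"
    by (subst sum.lessThan_Suc_shift) (simp add: sum_negf)
  ultimately show ?case
    using Suc.prems(1)[of 0] Suc.prems(2)[of 0] by simp
qed

lemma abs_alternating_sum_le: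
  fixes c :: "nat \<Rightarrow> real"
  assumes "\<And>i. 0 \<le> c i" and "\<And>i. c (Suc i) \<le> c i"
  shows "\<bar>\<Sum>i<n. (-1)^i * c i\<bar> \<le> c 0"
  using alternating_sum_bounds[of c n] assms by auto

lemma alternating_series_bounds:
  fixes a :: "nat \<Rightarrow> real"
  assumes "a \<longlonglongrightarrow> 0" and "\<And>n. 0 \<le> a n" and "\<And>n. a (Suc n) \<le> a n"
  shows "(\<lambda>n. (-1)^n * a n) sums (\<Sum>n. (-1)^n * a n)"
    and "0 \<le> (\<Sum>n. (-1)^n * a n)" and "(\<Sum>n. (-1)^n * a n) \<le> a 0"
  using summable_Leibniz'(1)[OF assms] summable_Leibniz'(2,4)[OF assms, of 0]
  by (simp_all add: summable_sums)

lemma alternating_null_sequence_eq_0: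
  fixes d :: "nat \<Rightarrow> real"
  assumes alt: "\<And>k. k \<ge> m \<Longrightarrow> d (Suc k) = - d k"
    and lim: "d \<longlonglongrightarrow> 0" and "k \<ge> m"
  shows "d k = 0"
proof -
  have const: "\<bar>d k\<bar> = \<bar>d m\<bar>" if "k \<ge> m" for k
    using that
  proof (induction k rule: dec_induct)
    case (step k)
    then show ?case using alt[OF step(1)] by simp
  qed simp
  have "eventually (\<lambda>k. \<bar>d m\<bar> = \<bar>d k\<bar>) sequentially"
    by (rule eventually_sequentiallyI[of m]) (rule const[symmetric])
  then have "(\<lambda>k. \<bar>d k\<bar>) \<longlonglongrightarrow> \<bar>d m\<bar>"
    by (rule Lim_transform_eventually[OF tendsto_const])
  moreover have "(\<lambda>k. \<bar>d k\<bar>) \<longlonglongrightarrow> 0"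
    using tendsto_rabs[OF lim] by simp
  ultimately have "\<bar>d m\<bar> = 0"
    by (rule LIMSEQ_unique)
  then show ?thesis
    using const[OF \<open>k \<ge> m\<close>] by simp
qed

section \<open>Centred binomial coefficients and a WZ pair\<close>

lemma Suc_mult_choose_Suc:
  assumes "i < N"
  shows "(N choose Suc i) * Suc i = (N choose i) * (N - i)"
proof -
  obtain M where M: "N = Suc M"
    using assms by (cases N) auto
  have "(N choose Suc i) * Suc i = N * (M choose i)"
    using Suc_times_binomial_eq[of M i] M by simp
  also have "\<dots> = (N - i) * (N choose i)"
    using binomial_absorb_comp[of N i] M by simp
  finally show ?thesis
    by simp
qed

definition centred_binom :: "nat \<Rightarrow> nat \<Rightarrow> real" where
  "centred_binom n k = (if k \<le> n then real (2*n choose (n - k)) else 0)"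

lemma centred_binom_nonneg: "centred_binom n k \<ge> 0"
  by (simp add: centred_binom_def)

lemma centred_binom_eq_0 [simp]: "n < k \<Longrightarrow> centred_binom n k = 0"
  by (simp add: centred_binom_def)

lemma centred_binom_le_centre: "centred_binom n k \<le> centred_binom n 0"
  by (simp add: centred_binom_def binomial_maximum')

lemma centred_binom_Suc_right:
  "centred_binom n (Suc k) * (real n + real k + 1) = centred_binom n k * (real n - real k)"
proof (cases "k < n")
  case True
  define i where "i = n - Suc k"
  have "(2*n choose Suc i) * Suc i = (2*n choose i) * (n + k + 1)"
    using Suc_mult_choose_Suc[of i "2*n"] True by (simp add: i_def)
  then have "real (2*n choose Suc i) * real (Suc i) = real (2*n choose i) * (real n + real k + 1)"
    by (metis of_nat_mult of_nat_add of_nat_1)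
  moreover have "real (Suc i) = real n - real k" "Suc i = n - k"
    using True by (simp_all add: i_def)
  ultimately show ?thesis
    using True by (simp add: centred_binom_def i_def)
qed (auto simp: centred_binom_def)

lemma centred_binom_Suc_left:
  "centred_binom (Suc n) k * ((real n + 1 - real k) * (real n + 1 + real k))
     = centred_binom n k * ((2 * real n + 2) * (2 * real n + 1))"
proof (cases "k \<le> n")
  case True
  define i where "i = n - k"
  have "(2*n+2 choose Suc i) * Suc i = (2*n+2) * (2*n+1 choose i)"
    using Suc_times_binomial_eq[of "2*n+1" i] by (simp del: binomial_Suc_Suc)
  moreover have "2*n+1 - i = n+k+1"
    using True by (simp add: i_def)
  ultimately have "(2*n+2 choose Suc i) * Suc i * (n+k+1) = (2*n+2) * ((2*n+1 - i) * (2*n+1 choose i))"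
    by (simp del: binomial_Suc_Suc add: algebra_simps)
  also have "\<dots> = (2*n+2) * (2*n+1) * (2*n choose i)"
    using binomial_absorb_comp[of "2*n+1" i] by (simp only: mult.assoc) simp
  finally have prod: "real (2*n+2 choose Suc i) * real (Suc i) * real (n+k+1)
      = real (2*n+2) * real (2*n+1) * real (2*n choose i)"
    by (metis of_nat_mult)
  have "centred_binom (Suc n) k = real (2*n+2 choose Suc i)"
    "centred_binom n k = real (2*n choose i)"
    using True by (simp_all add: centred_binom_def i_def Suc_diff_le)
  moreover have "real n + 1 - real k = real (Suc i)"
    using True by (simp add: i_def)
  ultimately show ?thesis
    using prod by (simp only:) (simp del: binomial_Suc_Suc add: algebra_simps)
qed (auto simp: centred_binom_def)

lemma centred_binom_Suc_0:
  "centred_binom (Suc n) 0 = 2 * (2 * real n + 1) / (real n + 1) * centred_binom n 0"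
proof -
  have "centred_binom (Suc n) 0 * ((real n + 1) * (real n + 1))
      = centred_binom n 0 * ((2 * real n + 2) * (2 * real n + 1))"
    using centred_binom_Suc_left[of n 0] by simp
  then have "(real n + 1) * (centred_binom (Suc n) 0 * (real n + 1) - 2 * (2 * real n + 1) * centred_binom n 0) = 0"
    by algebra
  then show ?thesis
    by (simp add: divide_simps)
qed

definition central_ratio :: "nat \<Rightarrow> real" where
  "central_ratio n = centred_binom n 0 / 4^n"

lemma central_ratio_Suc:
  "central_ratio (Suc n) = central_ratio n * (2 * real n + 1) / (2 * real n + 2)"
  by (simp add: central_ratio_def centred_binom_Suc_0 divide_simps) (simp add: algebra_simps)

lemma central_ratio_sq_le: "central_ratio n ^ 2 \<le> 1 / (2 * real n + 1)"
proof (induction n)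
  case 0
  then show ?case by (simp add: central_ratio_def centred_binom_def)
next
  case (Suc n)
  have pos: "0 < 2 * real n + 1" "0 < 2 * real n + 2"
    by simp_all
  have "central_ratio (Suc n) ^ 2 = central_ratio n ^ 2 * ((2 * real n + 1) / (2 * real n + 2))^2"
    by (simp add: central_ratio_Suc power_mult_distrib power_divide)
  also have "\<dots> \<le> 1 / (2 * real n + 1) * ((2 * real n + 1) / (2 * real n + 2))^2"
    using Suc.IH by (rule mult_right_mono) simp
  also have "\<dots> = (2 * real n + 1) / (2 * real n + 2)^2"
    using pos by (simp add: power2_eq_square divide_simps)
  also have "\<dots> \<le> 1 / (2 * real (Suc n) + 1)"
    using pos by (simp add: divide_simps power2_eq_square) (simp add: algebra_simps)
  finally show ?case .
qed

lemma central_ratio_tendsto_0: "central_ratio \<longlonglongrightarrow> 0"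
proof -
  have "1 / (2 * real n + 1) \<le> inverse (real (Suc n))" for n
    by (simp add: field_simps)
  then have "norm (central_ratio n ^ 2) \<le> inverse (real (Suc n))" for n
    using central_ratio_sq_le[of n] by (simp add: order_trans)
  then have "(\<lambda>n. central_ratio n ^ 2) \<longlonglongrightarrow> 0"
    by (intro Lim_null_comparison[OF always_eventually LIMSEQ_inverse_real_of_nat]) auto
  then show ?thesis
    by simp
qed

definition wz_F :: "nat \<Rightarrow> nat \<Rightarrow> real" where
  "wz_F n k = real k * centred_binom n k / (real n * 4^n)"

definition wz_G :: "nat \<Rightarrow> nat \<Rightarrow> real" where
  "wz_G n k = - 2 * (real n - real k) * centred_binom n k / (real n * 4^n)"

lemma wz_pair:
  assumes "n \<ge> 1"
  shows "wz_F n (Suc k) - wz_F n k = wz_G (Suc n) k - wz_G n k"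
proof (cases "k \<le> n")
  case True
  define C where "C = centred_binom n k"
  have pos: "real n > 0" "real n + real k + 1 > 0"
    using assms by simp_all
  have R: "centred_binom n (Suc k) = C * (real n - real k) / (real n + real k + 1)"
    using centred_binom_Suc_right[of n k] pos unfolding C_def by (simp add: field_simps)
  have S: "(real (Suc n) - real k) * centred_binom (Suc n) k
      = C * ((2 * real n + 2) * (2 * real n + 1)) / (real n + real k + 1)"
    using centred_binom_Suc_left[of n k] pos unfolding C_def by (simp add: field_simps)
  have "wz_F n (Suc k) - wz_F n k
      = C / 4^n * ((real n - 2 * real k - 2 * real k ^ 2) / (real n * (real n + real k + 1)))"
    unfolding wz_F_def R C_def[symmetric] using pos
    by (simp add: divide_simps power2_eq_square) (simp add: algebra_simps)
  also have "\<dots> = wz_G (Suc n) k - wz_G n k"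
    unfolding wz_G_def mult.assoc[of "-2"] S C_def[symmetric] using pos
    by (simp add: divide_simps power2_eq_square) (simp add: algebra_simps)
  finally show ?thesis .
next
  case False
  then show ?thesis
    by (cases "k = Suc n") (auto simp: wz_F_def wz_G_def)
qed

lemma wz_G_1_0: "wz_G 1 0 = -1"
  by (simp add: wz_G_def centred_binom_def)

lemma wz_G_1_pos: "k \<ge> 1 \<Longrightarrow> wz_G 1 k = 0"
  by (cases "k = 1") (auto simp: wz_G_def)

lemma abs_wz_G_le:
  assumes "n \<ge> 1"
  shows "\<bar>wz_G n k\<bar> \<le> 2 * central_ratio n"
proof -
  have "\<bar>real n - real k\<bar> * centred_binom n k \<le> real n * centred_binom n 0"
  proof (cases "k \<le> n")
    case True
    then show ?thesis
      by (intro mult_mono centred_binom_le_centre) (auto simp: centred_binom_nonneg)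
  qed (simp add: centred_binom_nonneg)
  then have "2 * (\<bar>real n - real k\<bar> * centred_binom n k) / (real n * 4^n)
      \<le> 2 * (real n * centred_binom n 0) / (real n * 4^n)"
    by (intro divide_right_mono) auto
  then show ?thesis
    using assms unfolding wz_G_def abs_divide abs_mult
    by (simp add: central_ratio_def centred_binom_nonneg)
qed

lemma wz_G_tendsto_0: "(\<lambda>n. wz_G (Suc n) k) \<longlonglongrightarrow> 0"
proof (rule Lim_null_comparison[OF always_eventually])
  show "\<forall>n. norm (wz_G (Suc n) k) \<le> 2 * central_ratio (Suc n)"
    using abs_wz_G_le by simp
  show "(\<lambda>n. 2 * central_ratio (Suc n)) \<longlonglongrightarrow> 0"
    using tendsto_mult_right_zero[OF LIMSEQ_Suc[OF central_ratio_tendsto_0]] by simp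
qed

lemma sum_wz_F_eq: "(\<Sum>i<N. wz_F (Suc i) k) = (\<Sum>l<k. wz_G (Suc N) l - wz_G 1 l)"
proof (induction k)
  case 0
  then show ?case by (simp add: wz_F_def)
next
  case (Suc k)
  have "(\<Sum>i<N. wz_F (Suc i) (Suc k)) - (\<Sum>i<N. wz_F (Suc i) k)
      = (\<Sum>i<N. wz_G (Suc (Suc i)) k - wz_G (Suc i) k)"
    unfolding sum_subtractf[symmetric] by (intro sum.cong refl wz_pair) simp
  also have "\<dots> = wz_G (Suc N) k - wz_G 1 k"
    using sum_lessThan_telescope[of "\<lambda>i. wz_G (Suc i) k" N] by simp
  finally show ?case
    using Suc.IH by simp
qed

lemma wz_F_sums:
  assumes "k \<ge> 1"
  shows "(\<lambda>i. wz_F (Suc i) k) sums 1"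
proof -
  have "(\<lambda>N. \<Sum>l<k. wz_G (Suc N) l - wz_G 1 l) \<longlonglongrightarrow> (\<Sum>l<k. 0 - wz_G 1 l)"
    by (intro tendsto_intros wz_G_tendsto_0)
  also have "(\<Sum>l<k. 0 - wz_G 1 l) = 1"
    using assms
    by (cases k) (simp_all only: sum.lessThan_Suc_shift, simp add: wz_G_1_0 wz_G_1_pos del: One_nat_def)
  finally show ?thesis
    unfolding sums_def sum_wz_F_eq .
qed

section \<open>Alternating harmonic tails and the column sums of e(n,k)\<close>

definition alt_tail :: "nat \<Rightarrow> real" where
  "alt_tail k = (\<Sum>b. (-1)^b / (real k + real b))"

lemma alt_tail_series:
  assumes "k \<ge> 1"
  shows "(\<lambda>b. (-1)^b / (real k + real b)) sums alt_tail k"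
    and "0 \<le> alt_tail k" and "alt_tail k \<le> 1 / real k"
proof -
  have "(\<lambda>b. 1 / (real k + real b)) \<longlonglongrightarrow> 0"
    by (rule Lim_null_comparison[OF always_eventually LIMSEQ_inverse_real_of_nat])
      (use assms in \<open>simp add: field_simps\<close>)
  note Leibniz = alternating_series_bounds[OF this]
  show "(\<lambda>b. (-1)^b / (real k + real b)) sums alt_tail k"
    "0 \<le> alt_tail k" "alt_tail k \<le> 1 / real k"
    using Leibniz assms by (simp_all add: alt_tail_def frac_le)
qed

lemma sum_alt_tail_eq:
  assumes "k \<ge> 1"
  shows "(\<Sum>b<N. (-1)^b / (real k + real b)) = alt_tail k - (-1)^N * alt_tail (k + N)"
proof -
  have "(\<lambda>b. (-1)^(b + N) / (real k + real (b + N)))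
      sums (alt_tail k - (\<Sum>b<N. (-1)^b / (real k + real b)))"
    by (rule sums_split_initial_segment[OF alt_tail_series(1)[OF assms]])
  moreover have "(\<lambda>b. (-1)^(b + N) / (real k + real (b + N)))
      = (\<lambda>b. (-1)^N * ((-1)^b / (real (k + N) + real b)))"
    by (simp add: power_add add_ac mult.commute)
  moreover have "(\<lambda>b. (-1)^N * ((-1)^b / (real (k + N) + real b))) sums ((-1)^N * alt_tail (k + N))"
    using assms by (intro sums_mult alt_tail_series) simp
  ultimately show ?thesis
    using sums_unique2 by fastforce
qed

lemma alt_tail_add_Suc:
  assumes "k \<ge> 1"
  shows "alt_tail k + alt_tail (Suc k) = 1 / real k"
  using sum_alt_tail_eq[OF assms, of 1] by simp

lemma alt_tail_Suc_le:
  assumes "k \<ge> 1"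
  shows "alt_tail (Suc k) \<le> alt_tail k"
proof -
  define t where "t b = 1 / ((real k + real b) * (real k + real b + 1))" for b
  have t_eq: "(-1)^b / (real k + real b) - (-1)^b / (real (Suc k) + real b) = (-1)^b * t b" for b
    using assms by (simp add: t_def field_simps)
  have "real (Suc b) \<le> (real k + real b) * (real k + real b + 1)" for b
    using mult_mono[of 1 "real k + real b" "real (Suc b)" "real k + real b + 1"] assms by simp
  then have "norm (t b) \<le> inverse (real (Suc b))" for b
    unfolding t_def inverse_eq_divide by (simp add: frac_le)
  then have "t \<longlonglongrightarrow> 0"
    by (intro Lim_null_comparison[OF always_eventually LIMSEQ_inverse_real_of_nat]) auto
  moreover have "0 \<le> t b" for b
    by (simp add: t_def)
  moreover have "t (Suc b) \<le> t b" for b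
    unfolding t_def using assms by (intro divide_left_mono mult_mono) auto
  ultimately have "0 \<le> (\<Sum>b. (-1)^b * t b)"
    by (rule alternating_series_bounds(2))
  have "(\<lambda>b. (-1)^b * t b) sums (alt_tail k - alt_tail (Suc k))"
    unfolding t_eq[symmetric] using assms by (intro sums_diff alt_tail_series) auto
  then show ?thesis
    using \<open>0 \<le> (\<Sum>b. (-1)^b * t b)\<close> by (simp add: sums_iff)
qed

definition e_coeff :: "nat \<Rightarrow> nat \<Rightarrow> real" where
  "e_coeff n k = centred_binom n k * (real n + real k) / (4^n * real n ^ 2)"

lemma e_coeff_nonneg: "e_coeff n k \<ge> 0"
  by (simp add: e_coeff_def centred_binom_nonneg)

lemma e_coeff_Suc: "e_coeff n (Suc k) = centred_binom n k * (real n - real k) / (4^n * real n ^ 2)"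
  using centred_binom_Suc_right[of n k] by (simp add: e_coeff_def add_ac)

lemma e_coeff_Suc_le: "e_coeff n (Suc k) \<le> e_coeff n k"
  unfolding e_coeff_Suc unfolding e_coeff_def
  by (intro divide_right_mono mult_left_mono) (auto simp: centred_binom_nonneg)

lemma e_coeff_add_Suc:
  assumes "n \<ge> 1" and "k \<ge> 1"
  shows "e_coeff n k + e_coeff n (Suc k) = 2 / real k * wz_F n k"
  using assms unfolding e_coeff_Suc
  by (simp add: e_coeff_def wz_F_def power2_eq_square divide_simps) (simp add: algebra_simps)

lemma e_coeff_series:
  assumes "k \<ge> 1"
  shows "summable (\<lambda>i. e_coeff (Suc i) k)"
    and "(\<Sum>i. e_coeff (Suc i) k) + (\<Sum>i. e_coeff (Suc i) (Suc k)) = 2 / real k"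
proof -
  have "(\<lambda>i. 2 / real k * wz_F (Suc i) k) sums (2 / real k)"
    using sums_mult[OF wz_F_sums[OF assms], of "2 / real k"] by simp
  moreover have "(\<lambda>i. 2 / real k * wz_F (Suc i) k) = (\<lambda>i. e_coeff (Suc i) k + e_coeff (Suc i) (Suc k))"
    using assms by (simp add: e_coeff_add_Suc)
  ultimately have pair: "(\<lambda>i. e_coeff (Suc i) k + e_coeff (Suc i) (Suc k)) sums (2 / real k)"
    by simp
  have "summable (\<lambda>i. e_coeff (Suc i) j)" if "j \<in> {k, Suc k}" for j
    by (rule summable_comparison_test'[OF sums_summable[OF pair]])
      (use that e_coeff_nonneg in auto)
  then show "summable (\<lambda>i. e_coeff (Suc i) k)"
    "(\<Sum>i. e_coeff (Suc i) k) + (\<Sum>i. e_coeff (Suc i) (Suc k)) = 2 / real k"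
    using pair by (auto simp: suminf_add sums_iff)
qed

lemma e_coeff_sums:
  assumes "k \<ge> 1"
  shows "(\<lambda>i. e_coeff (Suc i) k) sums (2 * alt_tail k)"
proof -
  define d where "d k = (\<Sum>i. e_coeff (Suc i) k) - 2 * alt_tail k" for k
  \<comment> \<open>d alternates in sign from k = 1 on and is O(1/k), so it vanishes\<close>
  have "d (Suc k) = - d k" if "k \<ge> 1" for k
    using e_coeff_series(2)[OF that] alt_tail_add_Suc[OF that] by (simp add: d_def)
  moreover have "\<bar>d k\<bar> \<le> 2 / real k" if "k \<ge> 1" for k
  proof -
    have "0 \<le> (\<Sum>i. e_coeff (Suc i) j)" if "j \<ge> 1" for j
      using that by (intro suminf_nonneg e_coeff_series(1)) (auto simp: e_coeff_nonneg)
    then have "0 \<le> (\<Sum>i. e_coeff (Suc i) k)" "0 \<le> (\<Sum>i. e_coeff (Suc i) (Suc k))"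
      using that by auto
    then show ?thesis
      using e_coeff_series(2)[OF that] alt_tail_series(2,3)[OF that]
      unfolding d_def by linarith
  qed
  then have "d \<longlonglongrightarrow> 0"
    by (intro Lim_null_comparison[OF eventually_sequentiallyI[of 1] lim_const_over_n[of 2]]) auto
  ultimately have "d k = 0"
    using alternating_null_sequence_eq_0[of 1 d k] assms by blast
  then show ?thesis
    using e_coeff_series(1)[OF assms] by (simp add: d_def summable_sums_iff)
qed

definition e_tail :: "nat \<Rightarrow> nat \<Rightarrow> real" where
  "e_tail N k = (\<Sum>i. e_coeff (Suc (i + N)) k)"

lemma e_tail_sums:
  assumes "k \<ge> 1"
  shows "(\<lambda>i. e_coeff (Suc (i + N)) k) sums e_tail N k"
  using sums_summable[OF sums_split_initial_segment[OF e_coeff_sums[OF assms]]]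
  by (simp add: e_tail_def summable_sums)

lemma sum_e_coeff_eq:
  assumes "k \<ge> 1"
  shows "(\<Sum>i<N. e_coeff (Suc i) k) = 2 * alt_tail k - e_tail N k"
  using sums_unique2[OF e_tail_sums[OF assms] sums_split_initial_segment[OF e_coeff_sums[OF assms]]]
  by simp

lemma e_tail_nonneg:
  assumes "k \<ge> 1"
  shows "0 \<le> e_tail N k"
  by (rule sums_le[OF _ sums_zero e_tail_sums[OF assms]]) (simp add: e_coeff_nonneg)

lemma e_tail_Suc_le:
  assumes "k \<ge> 1"
  shows "e_tail N (Suc k) \<le> e_tail N k"
  using assms by (intro sums_le[OF _ e_tail_sums e_tail_sums]) (simp_all add: e_coeff_Suc_le)

lemma e_tail_tendsto_0:
  assumes "k \<ge> 1"
  shows "(\<lambda>N. e_tail N k) \<longlonglongrightarrow> 0"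
proof -
  have "(\<lambda>N. 2 * alt_tail k - (\<Sum>i<N. e_coeff (Suc i) k)) \<longlonglongrightarrow> 2 * alt_tail k - 2 * alt_tail k"
    using e_coeff_sums[OF assms] unfolding sums_def by (intro tendsto_intros)
  then show ?thesis
    by (simp add: sum_e_coeff_eq[OF assms])
qed

section \<open>Partial fractions\<close>

definition pf_coeff :: "(nat \<Rightarrow> 'a::field) \<Rightarrow> nat \<Rightarrow> nat \<Rightarrow> 'a" where
  "pf_coeff a n k = (\<Prod>i\<in>{1..n} - {k}. a i / (a i - a k))"

lemma pf_coeff_Suc:
  "k \<le> n \<Longrightarrow> pf_coeff a (Suc n) k = pf_coeff a n k * (a (Suc n) / (a (Suc n) - a k))"
proof -
  assume "k \<le> n"
  then have "{1..Suc n} - {k} = insert (Suc n) ({1..n} - {k})"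
    by auto
  then show ?thesis
    by (simp add: pf_coeff_def mult.commute)
qed

lemma pf_coeff_diag: "pf_coeff a (Suc n) (Suc n) = (\<Prod>i=1..n. a i / (a i - a (Suc n)))"
proof -
  have "{1..Suc n} - {Suc n} = {1..n}"
    by auto
  then show ?thesis
    by (simp add: pf_coeff_def)
qed

lemma two_factor_partial_fractions:
  fixes a b x :: "'a::field"
  assumes "a \<noteq> b" and "a \<noteq> x" and "b \<noteq> x"
  shows "a / (a - x) * (b / (b - x)) = b / (b - a) * (a / (a - x)) + a / (a - b) * (b / (b - x))"
proof -
  have "a - x \<noteq> 0" "b - x \<noteq> 0" "b - a \<noteq> 0" "a - b \<noteq> 0"
    using assms by auto
  then show ?thesis
    by (simp add: divide_simps) (simp add: algebra_simps)
qed

lemma pf_coeff_Suc_partial_fractions: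
  fixes a :: "nat \<Rightarrow> 'a::field"
  assumes "k \<le> n" and "a k \<noteq> a (Suc n)" and "a k \<noteq> x" and "a (Suc n) \<noteq> x"
  shows "pf_coeff a n k * (a k / (a k - x)) * (a (Suc n) / (a (Suc n) - x))
      = pf_coeff a (Suc n) k * (a k / (a k - x))
        + pf_coeff a n k * (a k / (a k - a (Suc n))) * (a (Suc n) / (a (Suc n) - x))"
proof -
  have "pf_coeff a n k * (a k / (a k - x) * (a (Suc n) / (a (Suc n) - x)))
      = pf_coeff a n k * (a (Suc n) / (a (Suc n) - a k) * (a k / (a k - x))
        + a k / (a k - a (Suc n)) * (a (Suc n) / (a (Suc n) - x)))"
    using two_factor_partial_fractions[OF assms(2-4)] by simp
  then show ?thesis
    unfolding pf_coeff_Suc[OF assms(1)] by (simp only: mult.assoc distrib_left)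
qed

lemma pf_coeff_Suc_div_power:
  fixes a :: "nat \<Rightarrow> 'a::field"
  assumes "k \<le> n" and "a k \<noteq> 0" and "a (Suc n) \<noteq> 0" and "a (Suc n) \<noteq> a k"
  shows "pf_coeff a n k / a k ^ Suc j + pf_coeff a (Suc n) k / a k ^ j / a (Suc n)
      = pf_coeff a (Suc n) k / a k ^ Suc j"
proof -
  have "a (Suc n) - a k \<noteq> 0"
    using assms(4) by simp
  then show ?thesis
    using assms by (simp add: pf_coeff_Suc divide_simps) (simp add: algebra_simps)
qed

lemma prod_partial_fractions:
  fixes a :: "nat \<Rightarrow> 'a::field"
  assumes "n \<ge> 1" and "inj_on a {1..n}" and "x \<notin> a ` {1..n}"
  shows "(\<Prod>i=1..n. a i / (a i - x)) = (\<Sum>k=1..n. pf_coeff a n k * (a k / (a k - x)))"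
  using assms
proof (induction n arbitrary: x rule: nat_induct_at_least)
  case base
  then show ?case by (simp add: pf_coeff_def)
next
  case (Suc n)
  define b where "b = a (Suc n)"
  have inj: "inj_on a {1..n}"
    using Suc.prems(1) by (rule inj_on_subset) auto
  have b_notin: "b \<notin> a ` {1..n}"
    unfolding b_def by (subst inj_on_image_mem_iff[OF Suc.prems(1)]) auto
  have "b \<noteq> x" and x_notin: "x \<notin> a ` {1..n}"
    using Suc.prems(2) by (auto simp: b_def)
  have split: "pf_coeff a n k * (a k / (a k - x)) * (b / (b - x))
      = pf_coeff a (Suc n) k * (a k / (a k - x)) + pf_coeff a n k * (a k / (a k - b)) * (b / (b - x))"
    if "k \<in> {1..n}" for k
  proof -
    have "k \<le> n" "a k \<noteq> b" "a k \<noteq> x"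
      using that b_notin x_notin by force+
    from this[unfolded b_def] \<open>b \<noteq> x\<close>[unfolded b_def] show ?thesis
      unfolding b_def by (rule pf_coeff_Suc_partial_fractions)
  qed
  have "(\<Prod>i=1..Suc n. a i / (a i - x)) = (\<Prod>i=1..n. a i / (a i - x)) * (b / (b - x))"
    by (simp add: b_def)
  also have "\<dots> = (\<Sum>k=1..n. pf_coeff a n k * (a k / (a k - x))) * (b / (b - x))"
    by (simp only: Suc.IH[OF inj x_notin])
  also have "\<dots> = (\<Sum>k=1..n. pf_coeff a n k * (a k / (a k - x)) * (b / (b - x)))"
    by (rule sum_distrib_right)
  also have "\<dots> = (\<Sum>k=1..n. pf_coeff a (Suc n) k * (a k / (a k - x)))
      + (\<Sum>k=1..n. pf_coeff a n k * (a k / (a k - b))) * (b / (b - x))"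
    by (simp only: sum.cong[OF refl split] sum.distrib sum_distrib_right)
  also have "(\<Sum>k=1..n. pf_coeff a n k * (a k / (a k - b))) = pf_coeff a (Suc n) (Suc n)"
    using Suc.IH[OF inj b_notin] by (simp only: pf_coeff_diag b_def)
  finally show ?case
    by (simp add: b_def)
qed

lemma sum_pf_coeff:
  fixes a :: "nat \<Rightarrow> 'a::field"
  assumes "n \<ge> 1" and "inj_on a {1..n}" and "0 \<notin> a ` {1..n}"
  shows "(\<Sum>k=1..n. pf_coeff a n k) = 1"
proof -
  have "(\<Prod>i=1..n. a i / (a i - 0)) = (\<Sum>k=1..n. pf_coeff a n k * (a k / (a k - 0)))"
    using assms by (rule prod_partial_fractions)
  moreover have "a i / (a i - 0) = 1" if "i \<in> {1..n}" for i
    using assms(3) that by force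
  ultimately show ?thesis
    by simp
qed

(* h_j(1 / a 1, ..., 1 / a n), the complete homogeneous symmetric polynomial *)
fun star_sum :: "(nat \<Rightarrow> 'a::field) \<Rightarrow> nat \<Rightarrow> nat \<Rightarrow> 'a" where
  "star_sum a 0 n = 1"
| "star_sum a (Suc j) n = (\<Sum>k=1..n. star_sum a j k / a k)"

lemma star_sum_eq_sum_pf_coeff:
  fixes a :: "nat \<Rightarrow> 'a::field"
  assumes "n \<ge> 1" and "inj_on a {1..n}" and "0 \<notin> a ` {1..n}"
  shows "star_sum a j n = (\<Sum>k=1..n. pf_coeff a n k / a k ^ j)"
  using assms
proof (induction n arbitrary: j rule: nat_induct_at_least)
  case base
  then show ?case
    by (induction j) (simp_all add: pf_coeff_def)
next
  case (Suc n)
  note IH_n = Suc.IH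
  define b where "b = a (Suc n)"
  have inj: "inj_on a {1..n}"
    using Suc.prems(1) by (rule inj_on_subset) auto
  have nz: "0 \<notin> a ` {1..n}" "b \<noteq> 0"
    using Suc.prems(2) by (auto simp: b_def)
  have b_notin: "b \<notin> a ` {1..n}"
    unfolding b_def by (subst inj_on_image_mem_iff[OF Suc.prems(1)]) auto
  show ?case
  proof (induction j)
    case 0
    then show ?case
      using sum_pf_coeff[of "Suc n" a] Suc.prems by simp
  next
    case (Suc j)
    have step: "pf_coeff a n k / a k ^ Suc j + pf_coeff a (Suc n) k / a k ^ j / b
        = pf_coeff a (Suc n) k / a k ^ Suc j" if "k \<in> {1..n}" for k
    proof -
      have "k \<le> n" "a k \<noteq> 0" "b \<noteq> 0" "b \<noteq> a k"
        using that nz b_notin by force+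
      from this[unfolded b_def] show ?thesis
        unfolding b_def by (rule pf_coeff_Suc_div_power)
    qed
    have "star_sum a (Suc j) (Suc n) = star_sum a (Suc j) n + star_sum a j (Suc n) / b"
      by (simp add: b_def)
    also have "\<dots> = (\<Sum>k=1..n. pf_coeff a n k / a k ^ Suc j)
        + (\<Sum>k=1..Suc n. pf_coeff a (Suc n) k / a k ^ j) / b"
      by (simp only: IH_n[OF inj nz(1)] Suc.IH)
    also have "\<dots> = (\<Sum>k=1..n. pf_coeff a n k / a k ^ Suc j + pf_coeff a (Suc n) k / a k ^ j / b)
        + pf_coeff a (Suc n) (Suc n) / b ^ Suc j"
      by (simp add: sum.distrib sum_divide_distrib add_divide_distrib mult.commute b_def)
    also have "\<dots> = (\<Sum>k=1..n. pf_coeff a (Suc n) k / a k ^ Suc j) + pf_coeff a (Suc n) (Suc n) / b ^ Suc j"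
      by (simp only: sum.cong[OF refl step])
    also have "\<dots> = (\<Sum>k=1..Suc n. pf_coeff a (Suc n) k / a k ^ Suc j)"
      by (simp add: b_def)
    finally show ?case .
  qed
qed

definition odd_sq :: "nat \<Rightarrow> real" where
  "odd_sq i = (2 * real i - 1)^2"

lemma tstar2_eq_star_sum: "tstar2 j n = star_sum odd_sq j n"
  by (induction j arbitrary: n) (simp_all add: odd_sq_def)

lemma inj_on_odd_sq: "inj_on odd_sq {1..n}"
proof (rule inj_onI)
  fix i k assume "i \<in> {1..n}" "k \<in> {1..n}" "odd_sq i = odd_sq k"
  then have "2 * real i - 1 = 2 * real k - 1"
    by (subst (asm) odd_sq_def, subst (asm) odd_sq_def, subst (asm) power2_eq_iff_nonneg) auto
  then show "i = k"
    by simp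
qed

lemma odd_sq_pos: "i \<ge> 1 \<Longrightarrow> odd_sq i > 0"
  by (simp add: odd_sq_def)

lemma tstar2_eq_sum_pf_coeff:
  assumes "n \<ge> 1"
  shows "tstar2 j n = (\<Sum>k=1..n. pf_coeff odd_sq n k / odd_sq k ^ j)"
  unfolding tstar2_eq_star_sum
  using assms inj_on_odd_sq odd_sq_pos by (intro star_sum_eq_sum_pf_coeff) force+

lemma prod_odd_numbers: "(\<Prod>i=1..m. 2 * real i - 1) * (2^m * fact m) = fact (2*m)"
proof (induction m)
  case (Suc m)
  have "fact (2 * Suc m) = (fact (2*m) :: real) * ((2 * real m + 1) * (2 * real m + 2))"
    by (simp add: algebra_simps)
  then show ?case
    using Suc.IH[symmetric] by (simp add: algebra_simps)
qed simp

lemma prod_reversed_numbers: "(\<Prod>i=1..m. real m + 1 - real i) = fact m"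
proof -
  have "(\<Prod>i=1..m. real m + 1 - real i) = (\<Prod>i=1..m. real (m + 1 - i))"
    by (intro prod.cong) (auto simp: of_nat_diff)
  also have "\<dots> = real (\<Prod>i=1..m. m + 1 - i)"
    by simp
  also have "(\<Prod>i=1..m. m + 1 - i) = \<Prod>{1..m}"
    using prod.atLeastAtMost_rev[of "\<lambda>i. i" 1 m] by simp
  finally show ?thesis
    by (simp add: fact_prod)
qed

lemma prod_shifted_numbers: "(\<Prod>i=1..m. real c + real i) * fact c = fact (c + m)"
proof (induction m)
  case (Suc m)
  have "(\<Prod>i=1..Suc m. real c + real i) = (\<Prod>i=1..m. real c + real i) * (real c + real (Suc m))"
    by (simp add: mult.commute)
  then show ?case
    using Suc.IH[symmetric] by (simp add: algebra_simps)
qed simp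

lemma pf_coeff_odd_sq_diag: "pf_coeff odd_sq (Suc m) (Suc m) = (-1)^m * centred_binom m 0 / 16^m"
proof -
  have factor: "odd_sq i - odd_sq (Suc m) = (- 4) * ((real m + 1 - real i) * (real m + real i))" for i
    by (simp add: odd_sq_def power2_eq_square algebra_simps)
  have "pf_coeff odd_sq (Suc m) (Suc m)
      = (\<Prod>i=1..m. odd_sq i / ((- 4) * ((real m + 1 - real i) * (real m + real i))))"
    unfolding pf_coeff_diag factor ..
  also have "\<dots> = (\<Prod>i=1..m. odd_sq i) / ((\<Prod>i=1..m. - 4)
      * ((\<Prod>i=1..m. real m + 1 - real i) * (\<Prod>i=1..m. real m + real i)))"
    by (simp only: prod_dividef prod.distrib)
  also have "\<dots> = (\<Prod>i=1..m. 2 * real i - 1)^2 / ((- 4)^m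
      * ((\<Prod>i=1..m. real m + 1 - real i) * (\<Prod>i=1..m. real m + real i)))"
    by (simp add: odd_sq_def prod_power_distrib)
  also have "\<dots> = (fact (2*m) / (2^m * fact m))^2 / ((- 4)^m * (fact m * (fact (2*m) / fact m)))"
  proof -
    have "(\<Prod>i=1..m. 2 * real i - 1) = fact (2*m) / (2^m * fact m)"
      using prod_odd_numbers[of m] by (simp add: eq_divide_eq)
    moreover have "(\<Prod>i=1..m. real m + real i) = fact (2*m) / fact m"
      using prod_shifted_numbers[of m m] by (simp add: eq_divide_eq mult_2)
    ultimately show ?thesis
      by (simp only: prod_reversed_numbers)
  qed
  also have "\<dots> = (-1)^m * centred_binom m 0 / 16^m"
    by (simp add: centred_binom_def binomial_fact mult_2 power2_eq_square field_simps
        flip: power_mult_distrib)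
  finally show ?thesis .
qed

lemma pf_coeff_odd_sq:
  assumes "1 \<le> k" and "k \<le> n"
  shows "pf_coeff odd_sq n k = (-1)^(k-1) * 4 / (2 * real k - 1) * (real n + real k)
      * centred_binom n k * centred_binom n 0 / 16^n"
  using assms(2)
proof (induction n rule: dec_induct)
  case base
  obtain m where k: "k = Suc m"
    using assms(1) by (cases k) auto
  show ?case
    unfolding k pf_coeff_odd_sq_diag centred_binom_Suc_0
    by (simp add: centred_binom_def divide_simps) (simp add: algebra_simps)
next
  case (step n)
  have pos: "real n + 1 - real k > 0" "real n + real k > 0" "2 * real k - 1 > 0"
    using step.hyps assms(1) by auto
  have sq: "odd_sq (Suc n) = (2 * real n + 1)^2"
    by (simp add: odd_sq_def)
  have diff: "(2 * real n + 1)^2 - odd_sq k = 4 * (real n + 1 - real k) * (real n + real k)"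
    by (simp add: odd_sq_def power2_eq_square algebra_simps)
  have pf: "pf_coeff odd_sq (Suc n) k
      = pf_coeff odd_sq n k * ((2 * real n + 1)^2 / (4 * (real n + 1 - real k) * (real n + real k)))"
    by (simp only: pf_coeff_Suc[OF step.hyps(1)] sq diff)
  have cb: "centred_binom (Suc n) k = centred_binom n k * ((2 * real n + 2) * (2 * real n + 1))
      / ((real n + 1 - real k) * (real n + 1 + real k))"
    using pos by (subst nonzero_eq_divide_eq) (auto intro: centred_binom_Suc_left)
  show ?case
    using pos unfolding pf cb step.IH centred_binom_Suc_0
    by (simp add: divide_simps) (simp add: algebra_simps power2_eq_square)
qed

section \<open>Both sides as series of alternating tails\<close>

lemma quotient_odd_power_antimono:
  fixes x y :: real
  assumes "0 \<le> x" and "x \<le> y"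
  shows "x / (2 * real (Suc a) + 1)^m \<le> y / (2 * real a + 1)^m"
proof (rule frac_le)
  show "(2 * real a + 1)^m \<le> (2 * real (Suc a) + 1)^m"
    by (rule power_mono) auto
qed (use assms in auto)

lemma alt_tail_quotient_bounds:
  "0 \<le> alt_tail (Suc a + N) / (2 * real a + 1)^m"
  "alt_tail (Suc a + N) / (2 * real a + 1)^m \<le> 1 / real (Suc a + N)"
  "alt_tail (Suc (Suc a) + N) / (2 * real (Suc a) + 1)^m \<le> alt_tail (Suc a + N) / (2 * real a + 1)^m"
proof -
  note L = alt_tail_series(2,3)[of "Suc a + N"]
  show "0 \<le> alt_tail (Suc a + N) / (2 * real a + 1)^m"
    using L by simp
  have "alt_tail (Suc a + N) / (2 * real a + 1)^m \<le> alt_tail (Suc a + N) / 1"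
    by (rule frac_le) (use L in \<open>auto intro: one_le_power\<close>)
  then show "alt_tail (Suc a + N) / (2 * real a + 1)^m \<le> 1 / real (Suc a + N)"
    using L by simp
  show "alt_tail (Suc (Suc a) + N) / (2 * real (Suc a) + 1)^m \<le> alt_tail (Suc a + N) / (2 * real a + 1)^m"
    by (rule quotient_odd_power_antimono)
      (use alt_tail_series(2)[of "Suc (Suc a) + N"] alt_tail_Suc_le[of "Suc a + N"] in auto)
qed

lemma alt_tail_quotient_series_sums:
  "(\<lambda>a. (-1)^a * alt_tail (Suc a) / (2 * real a + 1)^m)
     sums (\<Sum>a. (-1)^a * alt_tail (Suc a) / (2 * real a + 1)^m)"
proof -
  define c where "c a = alt_tail (Suc a + 0) / (2 * real a + 1)^m" for a
  have c_bounds: "0 \<le> c a" "c (Suc a) \<le> c a" for a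
    unfolding c_def by (rule alt_tail_quotient_bounds(1,3))+
  have "c a \<le> inverse (real (Suc a))" for a
    using alt_tail_quotient_bounds(2)[of a 0 m] by (simp add: c_def inverse_eq_divide)
  then have "\<forall>a. norm (c a) \<le> inverse (real (Suc a))"
    using c_bounds by simp
  then have "c \<longlonglongrightarrow> 0"
    by (rule Lim_null_comparison[OF always_eventually LIMSEQ_inverse_real_of_nat])
  then have "(\<lambda>a. (-1)^a * c a) sums (\<Sum>a. (-1)^a * c a)"
    using c_bounds by (rule alternating_series_bounds(1))
  then show ?thesis
    by (simp add: c_def)
qed

lemma abs_sum_alt_tail_quotients_le:
  "\<bar>\<Sum>a<N. (-1)^a * alt_tail (Suc a + N) / (2 * real a + 1)^m\<bar> \<le> 1 / real (Suc N)"
proof -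
  have "\<bar>\<Sum>a<N. (-1)^a * (alt_tail (Suc a + N) / (2 * real a + 1)^m)\<bar>
      \<le> alt_tail (Suc 0 + N) / (2 * real 0 + 1)^m"
    by (rule abs_alternating_sum_le) (rule alt_tail_quotient_bounds(1,3))+
  also have "\<dots> \<le> 1 / real (Suc N)"
    using alt_tail_quotient_bounds(2)[of 0 N m] by simp
  finally show ?thesis
    by simp
qed

definition lhs_term :: "nat \<Rightarrow> nat \<Rightarrow> real" where
  "lhs_term j n = 4^n / (real n ^ 2 * real (2*n choose n)) * tstar2 j n"

lemma lhs_term_eq:
  assumes "n \<ge> 1"
  shows "lhs_term j n = (\<Sum>a<n. (-1)^a * 4 / (2 * real a + 1)^(2*j+1) * e_coeff n (Suc a))"
proof -
  have summand: "4^n / (real n ^ 2 * real (2*n choose n)) * pf_coeff odd_sq n k / odd_sq k ^ j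
      = (-1)^(k-1) * 4 / (2 * real k - 1)^(2*j+1) * e_coeff n k" if "k \<in> {1..n}" for k
  proof -
    have "real (2*n choose n) > 0" "2 * real k - 1 > 0"
      using that by auto
    moreover have "odd_sq k ^ j = (2 * real k - 1)^(2*j)" "(16::real)^n = 4^n * 4^n"
      by (simp_all add: odd_sq_def power_mult flip: power_mult_distrib)
    ultimately show ?thesis
      using that assms by (simp add: pf_coeff_odd_sq e_coeff_def centred_binom_def divide_simps)
  qed
  have "lhs_term j n = (\<Sum>k=1..n. 4^n / (real n ^ 2 * real (2*n choose n)) * pf_coeff odd_sq n k / odd_sq k ^ j)"
    by (simp add: lhs_term_def tstar2_eq_sum_pf_coeff[OF assms] sum_distrib_left)
  also have "\<dots> = (\<Sum>k=1..n. (-1)^(k-1) * 4 / (2 * real k - 1)^(2*j+1) * e_coeff n k)"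
    by (rule sum.cong[OF refl summand])
  also have "\<dots> = (\<Sum>a<n. (-1)^a * 4 / (2 * real a + 1)^(2*j+1) * e_coeff n (Suc a))"
    by (simp only: One_nat_def sum.atLeast1_atMost_eq) (simp add: add.commute)
  finally show ?thesis .
qed

lemma sum_lhs_term_eq:
  "(\<Sum>i<N. lhs_term j (Suc i))
     = 8 * (\<Sum>a<N. (-1)^a * alt_tail (Suc a) / (2 * real a + 1)^(2*j+1))
       - (\<Sum>a<N. (-1)^a * (4 * e_tail N (Suc a) / (2 * real a + 1)^(2*j+1)))"
proof -
  define w where "w a = (-1)^a * 4 / (2 * real a + 1)^(2*j+1)" for a
  have row: "lhs_term j (Suc i) = (\<Sum>a<N. w a * e_coeff (Suc i) (Suc a))" if "i < N" for i
  proof -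
    have "(\<Sum>a<N. w a * e_coeff (Suc i) (Suc a)) = (\<Sum>a<Suc i. w a * e_coeff (Suc i) (Suc a))"
      using that by (intro sum.mono_neutral_right) (auto simp: e_coeff_def)
    then show ?thesis
      by (simp add: lhs_term_eq w_def)
  qed
  have "(\<Sum>i<N. lhs_term j (Suc i)) = (\<Sum>i<N. \<Sum>a<N. w a * e_coeff (Suc i) (Suc a))"
    using row by (intro sum.cong) auto
  also have "\<dots> = (\<Sum>a<N. \<Sum>i<N. w a * e_coeff (Suc i) (Suc a))"
    by (rule sum.swap)
  also have "\<dots> = (\<Sum>a<N. w a * (\<Sum>i<N. e_coeff (Suc i) (Suc a)))"
    by (simp add: sum_distrib_left)
  also have "\<dots> = (\<Sum>a<N. w a * (2 * alt_tail (Suc a) - e_tail N (Suc a)))"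
    by (simp add: sum_e_coeff_eq)
  also have "\<dots> = (\<Sum>a<N. 8 * ((-1)^a * alt_tail (Suc a) / (2 * real a + 1)^(2*j+1))
      - (-1)^a * (4 * e_tail N (Suc a) / (2 * real a + 1)^(2*j+1)))"
    by (simp add: w_def right_diff_distrib diff_divide_distrib mult_ac)
  finally show ?thesis
    by (simp add: sum_subtractf sum_distrib_left)
qed

lemma lhs_sums:
  "(\<lambda>i. lhs_term j (Suc i)) sums (8 * (\<Sum>a. (-1)^a * alt_tail (Suc a) / (2 * real a + 1)^(2*j+1)))"
proof -
  define r where "r N a = 4 * e_tail N (Suc a) / (2 * real a + 1)^(2*j+1)" for N a
  have "\<forall>N. norm (\<Sum>a<N. (-1)^a * r N a) \<le> r N 0"
  proof (intro allI, unfold real_norm_def, rule abs_alternating_sum_le)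
    show "0 \<le> r N a" for N a
      unfolding r_def using e_tail_nonneg[of "Suc a" N] by simp
    show "r N (Suc a) \<le> r N a" for N a
      unfolding r_def
      by (rule quotient_odd_power_antimono) (use e_tail_nonneg e_tail_Suc_le in auto)
  qed
  moreover have "(\<lambda>N. r N 0) \<longlonglongrightarrow> 0"
    unfolding r_def using e_tail_tendsto_0[of 1] by (simp add: tendsto_mult_right_zero)
  ultimately have "(\<lambda>N. \<Sum>a<N. (-1)^a * r N a) \<longlonglongrightarrow> 0"
    by (rule Lim_null_comparison[OF always_eventually])
  then have "(\<lambda>N. 8 * (\<Sum>a<N. (-1)^a * alt_tail (Suc a) / (2 * real a + 1)^(2*j+1))
        - (\<Sum>a<N. (-1)^a * r N a))
      \<longlonglongrightarrow> 8 * (\<Sum>a. (-1)^a * alt_tail (Suc a) / (2 * real a + 1)^(2*j+1)) - 0"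
    by (intro tendsto_diff tendsto_mult tendsto_const
        alt_tail_quotient_series_sums[of "2*j+1", unfolded sums_def])
  then show ?thesis
    unfolding sums_def sum_lhs_term_eq r_def by simp
qed

lemma dbeta_sums:
  assumes "m \<ge> 1"
  shows "(\<lambda>i. (-1)^i / (2 * real i + 1)^m) sums dbeta m"
proof -
  have "norm (1 / (2 * real i + 1)^m) \<le> inverse (real (Suc i))" for i
  proof -
    have "real (Suc i) \<le> (2 * real i + 1)^1"
      by simp
    also have "\<dots> \<le> (2 * real i + 1)^m"
      using assms by (intro power_increasing) auto
    finally show ?thesis
      by (simp add: inverse_eq_divide frac_le)
  qed
  then have "(\<lambda>i. 1 / (2 * real i + 1)^m) \<longlonglongrightarrow> 0"
    by (intro Lim_null_comparison[OF always_eventually LIMSEQ_inverse_real_of_nat]) auto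
  moreover have "1 / (2 * real (Suc i) + 1)^m \<le> 1 / (2 * real i + 1)^m" for i
    by (rule quotient_odd_power_antimono) auto
  ultimately show ?thesis
    using alternating_series_bounds(1)[of "\<lambda>i. 1 / (2 * real i + 1)^m"]
    by (simp add: dbeta_def)
qed

lemma sum_alternating_power_products:
  fixes p q :: "'a::field"
  assumes "p \<noteq> 0" and "q \<noteq> 0" and "p + q \<noteq> 0"
  shows "(\<Sum>m\<le>2*j. (-1)^m / (p^(m+1) * q^(2*j-m+1))) = (1 / p^(2*j+1) + 1 / q^(2*j+1)) / (p + q)"
proof -
  define u where "u = 1 / p"
  define v where "v = 1 / q"
  have uv: "u \<noteq> 0" "v \<noteq> 0" "u + v \<noteq> 0"
    using assms by (auto simp: u_def v_def field_simps)
  have geometric: "(u + v) * (\<Sum>m<Suc (2*j). (-u)^m * v^(2*j-m)) = u^(2*j+1) + v^(2*j+1)"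
    using diff_power_eq_sum[of "-u" "2*j" v] by (simp add: power_minus_odd algebra_simps)
  have "(-1)^m / (p^(m+1) * q^(2*j-m+1)) = u * v * ((-u)^m * v^(2*j-m))" if "m \<le> 2*j" for m
    unfolding power_minus[of u] unfolding u_def v_def power_one_over by (simp add: power_add mult_ac)
  then have "(\<Sum>m\<le>2*j. (-1)^m / (p^(m+1) * q^(2*j-m+1))) = u * v * (\<Sum>m<Suc (2*j). (-u)^m * v^(2*j-m))"
    by (simp add: sum_distrib_left lessThan_Suc_atMost)
  also have "\<dots> = u * v / (u + v) * (u^(2*j+1) + v^(2*j+1))"
    using geometric uv(3) by (simp add: nonzero_eq_divide_eq mult.commute)
  also have "u * v / (u + v) = 1 / (p + q)"
    using assms by (simp add: u_def v_def divide_simps add.commute)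
  also have "u^(2*j+1) + v^(2*j+1) = 1 / p^(2*j+1) + 1 / q^(2*j+1)"
    by (simp add: u_def v_def power_one_over)
  finally show ?thesis
    by simp
qed

lemma sum_alternating_inverse_odd_sum:
  "(\<Sum>b<N. (-1)^b / ((2 * real a + 1) + (2 * real b + 1)))
     = (alt_tail (Suc a) - (-1)^N * alt_tail (Suc a + N)) / 2"
proof -
  have "(\<Sum>b<N. (-1)^b / ((2 * real a + 1) + (2 * real b + 1)))
      = (\<Sum>b<N. (-1)^b / (real (Suc a) + real b)) / 2"
    unfolding sum_divide_distrib by (intro sum.cong refl) (simp add: field_simps)
  then show ?thesis
    using sum_alt_tail_eq[of "Suc a" N] by simp
qed

lemma beta_convolution_partial_eq:
  "(\<Sum>m\<le>2*j. (-1)^m * ((\<Sum>a<N. (-1)^a / (2 * real a + 1)^(m+1))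
       * (\<Sum>b<N. (-1)^b / (2 * real b + 1)^(2*j-m+1))))
   = (\<Sum>a<N. (-1)^a * alt_tail (Suc a) / (2 * real a + 1)^(2*j+1))
     - (-1)^N * (\<Sum>a<N. (-1)^a * alt_tail (Suc a + N) / (2 * real a + 1)^(2*j+1))"
  (is "?lhs = ?rhs")
proof -
  define p where "p a = 2 * real a + 1" for a
  define X where "X a b = (-1)^a * (-1)^b * (1 / p a^(2*j+1) / (p a + p b))" for a b
  have reorder: "(-1)^m * ((-1)^a / x^(m+1) * ((-1)^b / y^k))
      = (-1)^a * (-1)^b * ((-1)^m / (x^(m+1) * y^k))" for m a b k and x y :: real
    by simp
  have pair: "(\<Sum>m\<le>2*j. (-1)^m / (p a^(m+1) * p b^(2*j-m+1)))
      = (1 / p a^(2*j+1) + 1 / p b^(2*j+1)) / (p a + p b)" for a b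
    by (rule sum_alternating_power_products) (simp_all add: p_def add_pos_pos)
  have "?lhs = (\<Sum>m\<le>2*j. \<Sum>a<N. \<Sum>b<N. (-1)^m * ((-1)^a / p a^(m+1) * ((-1)^b / p b^(2*j-m+1))))"
    unfolding p_def sum_product unfolding sum_distrib_left ..
  also have "\<dots> = (\<Sum>a<N. \<Sum>b<N. \<Sum>m\<le>2*j. (-1)^m * ((-1)^a / p a^(m+1) * ((-1)^b / p b^(2*j-m+1))))"
    by (subst sum.swap) (simp only: sum.swap[of _ "{..2*j}"])
  also have "\<dots> = (\<Sum>a<N. \<Sum>b<N. (-1)^a * (-1)^b * (\<Sum>m\<le>2*j. (-1)^m / (p a^(m+1) * p b^(2*j-m+1))))"
    by (simp only: reorder sum_distrib_left)
  also have "\<dots> = (\<Sum>a<N. \<Sum>b<N. X a b + X b a)"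
    unfolding pair by (intro sum.cong refl) (simp add: X_def add_divide_distrib distrib_left add.commute mult.commute)
  also have "\<dots> = 2 * (\<Sum>a<N. \<Sum>b<N. X a b)"
    by (simp only: sum.distrib sum.swap[of "\<lambda>a b. X b a"] mult_2)
  also have "\<dots> = 2 * (\<Sum>a<N. (-1)^a / p a^(2*j+1) * (\<Sum>b<N. (-1)^b / (p a + p b)))"
    unfolding X_def sum_distrib_left by (simp add: mult_ac)
  also have "\<dots> = (\<Sum>a<N. (-1)^a / p a^(2*j+1) * (alt_tail (Suc a) - (-1)^N * alt_tail (Suc a + N)))"
    unfolding p_def sum_alternating_inverse_odd_sum sum_distrib_left by simp
  also have "\<dots> = ?rhs"
    by (simp add: p_def sum_subtractf sum_distrib_left right_diff_distrib diff_divide_distrib mult_ac)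
  finally show ?thesis .
qed

lemma beta_convolution_eq:
  "(\<Sum>k=0..2*j. (-1)^k * dbeta (k+1) * dbeta (2*j - k + 1))
     = (\<Sum>a. (-1)^a * alt_tail (Suc a) / (2 * real a + 1)^(2*j+1))"
proof -
  have "(\<lambda>N. \<Sum>m\<le>2*j. (-1)^m * ((\<Sum>a<N. (-1)^a / (2 * real a + 1)^(m+1))
       * (\<Sum>b<N. (-1)^b / (2 * real b + 1)^(2*j-m+1))))
      \<longlonglongrightarrow> (\<Sum>m\<le>2*j. (-1)^m * (dbeta (m+1) * dbeta (2*j-m+1)))"
  proof -
    have "(\<lambda>N. \<Sum>a<N. (-1)^a / (2 * real a + 1)^(m+1)) \<longlonglongrightarrow> dbeta (m+1)" for m
      using dbeta_sums[of "m+1"] by (simp add: sums_def)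
    then show ?thesis
      by (intro tendsto_sum tendsto_mult tendsto_const)
  qed
  moreover have "(\<lambda>N. (-1)^N * (\<Sum>a<N. (-1)^a * alt_tail (Suc a + N) / (2 * real a + 1)^(2*j+1)))
      \<longlonglongrightarrow> 0"
    using abs_sum_alt_tail_quotients_le[of _ "2*j+1"]
    by (intro Lim_null_comparison[OF always_eventually LIMSEQ_inverse_real_of_nat])
      (simp add: inverse_eq_divide abs_mult)
  then have "(\<lambda>N. (\<Sum>a<N. (-1)^a * alt_tail (Suc a) / (2 * real a + 1)^(2*j+1))
       - (-1)^N * (\<Sum>a<N. (-1)^a * alt_tail (Suc a + N) / (2 * real a + 1)^(2*j+1)))
      \<longlonglongrightarrow> (\<Sum>a. (-1)^a * alt_tail (Suc a) / (2 * real a + 1)^(2*j+1)) - 0"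
    by (rule tendsto_diff[OF alt_tail_quotient_series_sums[of "2*j+1", unfolded sums_def]])
  ultimately show ?thesis
    unfolding beta_convolution_partial_eq by (simp add: atLeast0AtMost mult.assoc LIMSEQ_unique)
qed

theorem theorem1:
  fixes j :: nat
  shows "(\<lambda>i. let n = Suc i in
            4^n / (real n ^ 2 * real (2*n choose n)) * tstar2 j n)
         sums (8 * (\<Sum>k=0..2*j. (-1)^k * dbeta (k+1) * dbeta (2*j - k + 1)))"
proof -
  have "(\<lambda>i. let n = Suc i in 4^n / (real n ^ 2 * real (2*n choose n)) * tstar2 j n)
      = (\<lambda>i. lhs_term j (Suc i))"
    by (simp add: lhs_term_def Let_def)
  then show ?thesis
    unfolding beta_convolution_eq using lhs_sums[of j] by simp
qed

end
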